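(* Fix $k\in\mathbb{N}$ and let $\alpha=\alpha(n)\in(0,\infty)$. If $\alpha/\sqrt{n}\to\infty$ as $n\to\infty$, then $d_{TV}(M_{n,k}^{\alpha},M_{n,k}^{\infty})\to 0$ as $n\to\infty$.
   Context: A $k$-out map on $[n]$ is a map $M:[n]\to[n]^k$, viewed as a digraph on $[n]$ in which each vertex has $k$ out-arcs labeled $1,\dots,k$; $\mathcal{M}_{n,k}$ denotes the set of all such maps. The in-degree $d_j$ of vertex $j$ is the total number of coordinates, over all vertices $i$ and all $k$ labels, of $M(i)$ equal to $j$ (so $d_1+\dots+d_n=kn$). For $\alpha\in(0,\infty)$, the random $k$-out map $M_{n,k}^{\alpha}$ is generated by inserting $kn$ out-arcs, $k$ per vertex: every vertex starts with weight $\alpha$; at each step a vertex whose out-degree is below $k$ picks its next image $j$ with probability proportional to the current weight of $j$, and the weight of $j$ then increases by $1$. Its law is $P(M_{n,k}^{\alpha}=M)=\prod_{j=1}^n \alpha^{\overline{d_j}}/(\alpha n)^{\overline{kn}}$, where $(d_1,\dots,d_n)$ is the in-degree sequence of $M$ and $x^{\overline{y}}=x(x+1)\cdots(x+y-1)$. $M_{n,k}^{\infty}$ denotes the uniformly random element of $\mathcal{M}_{n,k}$ (probability $n^{-kn}$ each). $d_{TV}(M_{n,k}^{\alpha},M_{n,k}^{\infty})=\sup_{\mathcal{A}\subseteq\mathcal{M}_{n,k}}|P(M_{n,k}^{\alpha}\in\mathcal{A})-P(M_{n,k}^{\infty}\in\mathcal{A})|=\frac12\sum_{M\in\mathcal{M}_{n,k}}|P(M_{n,k}^{\alpha}=M)-P(M_{n,k}^{\infty}=M)|$.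 *)

theory Defs
  imports "HOL-Analysis.Analysis"
begin

text \<open>Vertices of [n] are represented as 0,...,n-1 and arc labels 1..k as 0,...,k-1.
  A k-out map M : [n] -> [n]^k is a function M with M i l = l-th image of vertex i
  (extensional: M i l = undefined outside the domain).\<close>

definition kout_maps :: "nat \<Rightarrow> nat \<Rightarrow> (nat \<Rightarrow> nat \<Rightarrow> nat) set" where
  "kout_maps n k = {..<n} \<rightarrow>\<^sub>E ({..<k} \<rightarrow>\<^sub>E {..<n})"

definition indeg :: "nat \<Rightarrow> nat \<Rightarrow> (nat \<Rightarrow> nat \<Rightarrow> nat) \<Rightarrow> nat \<Rightarrow> nat" where
  "indeg n k M j = card {(i, l). i < n \<and> l < k \<and> M i l = j}"

definition prob_alpha :: "nat \<Rightarrow> nat \<Rightarrow> real \<Rightarrow> (nat \<Rightarrow> nat \<Rightarrow> nat) \<Rightarrow> real" where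
  "prob_alpha n k \<alpha> M =
     (\<Prod>j<n. pochhammer \<alpha> (indeg n k M j)) / pochhammer (\<alpha> * real n) (k * n)"

definition prob_unif :: "nat \<Rightarrow> nat \<Rightarrow> (nat \<Rightarrow> nat \<Rightarrow> nat) \<Rightarrow> real" where
  "prob_unif n k M = 1 / real n ^ (k * n)"

definition dTV :: "nat \<Rightarrow> nat \<Rightarrow> real \<Rightarrow> real" where
  "dTV n k \<alpha> = (1/2) * (\<Sum>M\<in>kout_maps n k. \<bar>prob_alpha n k \<alpha> M - prob_unif n k M\<bar>)"

end

theory Submission
  imports Defs
begin

text \<open>Listing the \<open>k n\<close> arcs of a \<open>k\<close>-out map in their order of insertion turns it into a word
  \<open>f\<close> of length \<open>N = k n\<close> over \<open>[n]\<close>, and the random map with parameter \<open>\<alpha>\<close> becomes \<open>N\<close> draws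
  from a Polya urn: \<open>f\<close> has probability \<open>p(f) = \<Prod>\<^sub>t (\<alpha> + c\<^sub>t) / (\<alpha> n + t)\<close>, where \<open>c\<^sub>t\<close> counts
  the earlier occurrences of the letter \<open>f t\<close>. Both laws have mass one, so \<open>d\<^sub>T\<^sub>V\<close> is the total
  positive part of \<open>n\<^sup>-\<^sup>N - p(f)\<close>, and \<open>1 - r \<le> - ln r\<close> for the likelihood ratio \<open>r = n\<^sup>N p(f)\<close>.
  Expanding the logarithm gives \<open>- ln r \<le> \<bar>X - \<mu>\<bar> / \<alpha> + Q / \<alpha>\<^sup>2\<close>, where \<open>X = \<Sum>\<^sub>t c\<^sub>t\<close> counts the
  pairs of equal letters, \<open>\<mu> = N (N - 1) / 2 n\<close> is its uniform mean and \<open>Q = \<Sum>\<^sub>t c\<^sub>t\<^sup>2\<close>. Under the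
  uniform law \<open>Var X \<le> N\<^sup>2 / n\<close> and \<open>E Q \<le> N\<^sup>2 / n + N\<^sup>3 / n\<^sup>2\<close>, hence
  \<open>d\<^sub>T\<^sub>V \<le> k / (\<alpha> / \<surd>n) + (k\<^sup>2 + k\<^sup>3) / (\<alpha> / \<surd>n)\<^sup>2\<close>.\<close>

abbreviation words :: "nat \<Rightarrow> nat \<Rightarrow> (nat \<Rightarrow> nat) set" where
  "words n N \<equiv> {..<N} \<rightarrow>\<^sub>E {..<n}"

definition occ :: "(nat \<Rightarrow> nat) \<Rightarrow> nat \<Rightarrow> nat \<Rightarrow> nat" where
  "occ f t x = card {s. s < t \<and> f s = x}"

definition prev_occ :: "(nat \<Rightarrow> nat) \<Rightarrow> nat \<Rightarrow> nat" where
  "prev_occ f t = occ f t (f t)"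

definition polya :: "nat \<Rightarrow> nat \<Rightarrow> real \<Rightarrow> (nat \<Rightarrow> nat) \<Rightarrow> real" where
  "polya n N a f = (\<Prod>t<N. a + real (prev_occ f t)) / (\<Prod>t<N. a * real n + real t)"

lemma sum_words_Suc:
  "(\<Sum>g\<in>words n (Suc N). G g) = (\<Sum>f\<in>words n N. \<Sum>x<n. G (f(N := x)))"
proof -
  have words_eq: "words n (Suc N) = (\<lambda>(x, f). f(N := x)) ` ({..<n} \<times> words n N)"
    using PiE_insert_eq[of N "{..<N}" "\<lambda>_. {..<n}"] by (simp add: lessThan_Suc)
  have inj: "inj_on (\<lambda>(x, f). f(N := x)) ({..<n} \<times> words n N)"
    using inj_combinator[of N "{..<N}" "\<lambda>_. {..<n}"] by simp
  have "(\<Sum>g\<in>words n (Suc N). G g) = (\<Sum>(x, f)\<in>{..<n} \<times> words n N. G (f(N := x)))"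
    unfolding words_eq by (subst sum.reindex[OF inj]) (simp add: o_def case_prod_unfold)
  also have "\<dots> = (\<Sum>x<n. \<Sum>f\<in>words n N. G (f(N := x)))"
    by (simp add: sum.cartesian_product split_def)
  finally show ?thesis
    by (simp add: sum.swap[of _ "{..<n}"])
qed

lemma card_words: "card (words n N) = n ^ N"
  by (simp add: card_funcsetE)

lemma words_lessD: "f \<in> words n N \<Longrightarrow> s < N \<Longrightarrow> f s < n"
  by (auto simp: PiE_iff)

lemma occ_Suc: "occ f (Suc t) x = occ f t x + (if f t = x then 1 else 0)"
proof -
  have "{s. s < Suc t \<and> f s = x} = {s. s < t \<and> f s = x} \<union> (if f t = x then {t} else {})"
    by (auto simp: less_Suc_eq)
  then show ?thesis
    unfolding occ_def by (auto simp: card_insert_if)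
qed

lemma occ_fun_upd: "t \<le> N \<Longrightarrow> occ (f(N := x)) t y = occ f t y"
  unfolding occ_def by (intro arg_cong[where f = card]) auto

lemma prev_occ_fun_upd: "t < N \<Longrightarrow> prev_occ (f(N := x)) t = prev_occ f t"
  by (simp add: prev_occ_def occ_fun_upd)

lemma prev_occ_fun_upd_self: "prev_occ (f(N := x)) N = occ f N x"
  by (simp add: prev_occ_def occ_fun_upd)

lemma sum_prev_occ_fun_upd:
  "(\<Sum>t<Suc N. h (prev_occ (f(N := x)) t)) = (\<Sum>t<N. h (prev_occ f t)) + h (occ f N x)"
  by (simp add: prev_occ_fun_upd prev_occ_fun_upd_self)

lemma sum_occ: "(\<And>s. s < N \<Longrightarrow> f s < n) \<Longrightarrow> (\<Sum>x<n. occ f N x) = N"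
proof (induction N)
  case (Suc N)
  then show ?case
    by (simp add: occ_Suc sum.distrib)
qed (simp add: occ_def)

lemma sum_occ_squared:
  "(\<And>s. s < N \<Longrightarrow> f s < n) \<Longrightarrow>
     (\<Sum>x<n. (real (occ f N x))\<^sup>2) = real N + 2 * (\<Sum>t<N. real (prev_occ f t))"
proof (induction N)
  case (Suc N)
  have "(\<Sum>x<n. (real (occ f (Suc N) x))\<^sup>2) =
      (\<Sum>x<n. (real (occ f N x))\<^sup>2 + (if f N = x then 2 * real (occ f N x) + 1 else 0))"
    by (intro sum.cong) (auto simp: occ_Suc power2_eq_square algebra_simps)
  also have "\<dots> = (\<Sum>x<n. (real (occ f N x))\<^sup>2) + 2 * real (prev_occ f N) + 1"
    using Suc.prems by (simp add: sum.distrib prev_occ_def)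
  finally show ?case
    using Suc by simp
qed (simp add: occ_def)

lemma sum_prod_prev_occ:
  fixes a :: "'a::comm_semiring_1"
  shows "(\<Sum>f\<in>words n N. \<Prod>t<N. a + of_nat (prev_occ f t)) = (\<Prod>t<N. a * of_nat n + of_nat t)"
proof (induction N)
  case (Suc N)
  have "(\<Sum>f\<in>words n (Suc N). \<Prod>t<Suc N. a + of_nat (prev_occ f t))
      = (\<Sum>f\<in>words n N. (\<Prod>t<N. a + of_nat (prev_occ f t)) * (\<Sum>x<n. a + of_nat (occ f N x)))"
    by (simp add: sum_words_Suc prev_occ_fun_upd prev_occ_fun_upd_self sum_distrib_left)
  also have "\<dots> = (\<Sum>f\<in>words n N. (\<Prod>t<N. a + of_nat (prev_occ f t)) * (a * of_nat n + of_nat N))"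
  proof (intro sum.cong refl)
    fix f assume "f \<in> words n N"
    then have "(\<Sum>x<n. a + of_nat (occ f N x)) = a * of_nat n + of_nat N"
      using sum_occ[of N f n] words_lessD
      by (simp add: sum.distrib mult.commute flip: of_nat_sum)
    then show "(\<Prod>t<N. a + of_nat (prev_occ f t)) * (\<Sum>x<n. a + of_nat (occ f N x)) =
        (\<Prod>t<N. a + of_nat (prev_occ f t)) * (a * of_nat n + of_nat N)"
      by simp
  qed
  finally show ?case
    using Suc by (simp add: sum_distrib_right[symmetric])
qed simp

lemma sum_collisions:
  "2 * real n * (\<Sum>f\<in>words n N. \<Sum>t<N. real (prev_occ f t)) = real n ^ N * real N * (real N - 1)"
proof (induction N)
  case (Suc N)
  define S where "S = (\<Sum>f\<in>words n N. \<Sum>t<N. real (prev_occ f t))"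
  have "(\<Sum>f\<in>words n (Suc N). \<Sum>t<Suc N. real (prev_occ f t))
      = (\<Sum>f\<in>words n N. \<Sum>x<n. (\<Sum>t<N. real (prev_occ f t)) + real (occ f N x))"
    by (simp only: sum_words_Suc sum_prev_occ_fun_upd)
  also have "\<dots> = (\<Sum>f\<in>words n N. real n * (\<Sum>t<N. real (prev_occ f t)) + real N)"
    using sum_occ words_lessD by (intro sum.cong refl) (simp add: sum.distrib flip: of_nat_sum)
  also have "\<dots> = real n * S + real n ^ N * real N"
    by (simp add: S_def sum.distrib sum_distrib_left card_words)
  finally have "2 * real n * (\<Sum>f\<in>words n (Suc N). \<Sum>t<Suc N. real (prev_occ f t))
      = real n * (2 * real n * S) + 2 * real n ^ Suc N * real N"
    by (simp add: algebra_simps)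
  also have "\<dots> = real n ^ Suc N * real (Suc N) * (real (Suc N) - 1)"
    unfolding Suc.IH[folded S_def] by (simp add: algebra_simps)
  finally show ?case .
qed simp

lemma sum_square_shift:
  fixes c :: "nat \<Rightarrow> real"
  shows "(\<Sum>x<n. (y + c x - m)\<^sup>2) = real n * (y - m)\<^sup>2 + 2 * (y - m) * (\<Sum>x<n. c x) + (\<Sum>x<n. (c x)\<^sup>2)"
proof -
  have "(\<Sum>x<n. (y + c x - m)\<^sup>2) = (\<Sum>x<n. (y - m)\<^sup>2 + 2 * (y - m) * c x + (c x)\<^sup>2)"
    by (intro sum.cong) (auto simp: power2_eq_square algebra_simps)
  then show ?thesis
    by (simp add: sum.distrib sum_distrib_left)
qed

lemma sum_collisions_dev_squared:
  assumes "n > 0"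
  shows "(\<Sum>f\<in>words n N. ((\<Sum>t<N. real (prev_occ f t)) - real N * (real N - 1) / (2 * real n))\<^sup>2)
      \<le> real n ^ N * (real N)\<^sup>2 / real n"
proof (induction N)
  case (Suc N)
  define X where "X f = (\<Sum>t<N. real (prev_occ f t))" for f
  define \<mu> where "\<mu> = real N * (real N - 1) / (2 * real n)"
  have n: "real n > 0"
    using assms by simp
  have mean_Suc: "real (Suc N) * (real (Suc N) - 1) / (2 * real n) = \<mu> + real N / real n"
    unfolding \<mu>_def using n by (simp add: field_simps)
  have "(\<Sum>f\<in>words n (Suc N). ((\<Sum>t<Suc N. real (prev_occ f t)) - real (Suc N) * (real (Suc N) - 1) / (2 * real n))\<^sup>2)
      = (\<Sum>f\<in>words n N. \<Sum>x<n. (X f + real (occ f N x) - (\<mu> + real N / real n))\<^sup>2)"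
    unfolding sum_words_Suc mean_Suc X_def by (simp add: prev_occ_fun_upd prev_occ_fun_upd_self)
  also have "\<dots> = (\<Sum>f\<in>words n N. real n * (X f - \<mu>)\<^sup>2 + real N + 2 * X f - (real N)\<^sup>2 / real n)"
  proof (intro sum.cong refl)
    fix f assume "f \<in> words n N"
    then have "\<And>s. s < N \<Longrightarrow> f s < n"
      by (rule words_lessD)
    from sum_occ[OF this] sum_occ_squared[OF this]
    show "(\<Sum>x<n. (X f + real (occ f N x) - (\<mu> + real N / real n))\<^sup>2) =
        real n * (X f - \<mu>)\<^sup>2 + real N + 2 * X f - (real N)\<^sup>2 / real n"
      unfolding sum_square_shift X_def using n
      by (simp add: field_simps power2_eq_square flip: of_nat_sum)
  qed
  also have "\<dots> = real n * (\<Sum>f\<in>words n N. (X f - \<mu>)\<^sup>2) + real n ^ N * (real N - (real N)\<^sup>2 / real n)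
      + 2 * (\<Sum>f\<in>words n N. X f)"
    by (simp add: sum.distrib sum_subtractf sum_distrib_left card_words algebra_simps)
  also have "2 * (\<Sum>f\<in>words n N. X f) = real n ^ N * real N * (real N - 1) / real n"
    using sum_collisions[of n N] n unfolding X_def by (simp add: field_simps)
  also have "real n * (\<Sum>f\<in>words n N. (X f - \<mu>)\<^sup>2) + real n ^ N * (real N - (real N)\<^sup>2 / real n)
      + real n ^ N * real N * (real N - 1) / real n
    \<le> real n * (real n ^ N * (real N)\<^sup>2 / real n) + real n ^ N * (real N - (real N)\<^sup>2 / real n)
      + real n ^ N * real N * (real N - 1) / real n"
    using Suc n unfolding X_def \<mu>_def by (intro add_right_mono mult_left_mono) auto
  also have "\<dots> \<le> real n ^ Suc N * (real (Suc N))\<^sup>2 / real n"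
    using n by (simp add: field_simps power2_eq_square)
  finally show ?case .
qed simp

lemma sum_abs_collisions_dev:
  assumes "n > 0"
  shows "(\<Sum>f\<in>words n N. \<bar>(\<Sum>t<N. real (prev_occ f t)) - real N * (real N - 1) / (2 * real n)\<bar>)
      \<le> real n ^ N * (real N / sqrt (real n))"
proof -
  define D where "D f = (\<Sum>t<N. real (prev_occ f t)) - real N * (real N - 1) / (2 * real n)" for f
  have "(\<Sum>f\<in>words n N. \<bar>D f\<bar>)\<^sup>2 \<le> (\<Sum>f\<in>words n N. (D f)\<^sup>2) * real n ^ N"
    using sum_squared_le_sum_of_squares[of "\<lambda>f. \<bar>D f\<bar>" "words n N"] by (simp add: card_words)
  also have "\<dots> \<le> real n ^ N * (real N)\<^sup>2 / real n * real n ^ N"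
    using sum_collisions_dev_squared[OF assms, of N] unfolding D_def by (intro mult_right_mono) auto
  also have "\<dots> = (real n ^ N * (real N / sqrt (real n)))\<^sup>2"
    using assms by (simp add: power_mult_distrib power_divide power2_eq_square)
  finally show ?thesis
    unfolding D_def by (rule power2_le_imp_le) simp
qed

lemma sum_sum_prev_occ_squared:
  assumes "n > 0"
  shows "(\<Sum>f\<in>words n N. \<Sum>t<N. (real (prev_occ f t))\<^sup>2)
      \<le> real n ^ N * ((real N)\<^sup>2 / real n + (real N)^3 / (real n)\<^sup>2)"
proof (induction N)
  case (Suc N)
  define Q where "Q f = (\<Sum>t<N. (real (prev_occ f t))\<^sup>2)" for f
  have n: "real n > 0"
    using assms by simp
  have "(\<Sum>f\<in>words n (Suc N). \<Sum>t<Suc N. (real (prev_occ f t))\<^sup>2)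
      = (\<Sum>f\<in>words n N. \<Sum>x<n. Q f + (real (occ f N x))\<^sup>2)"
    unfolding sum_words_Suc Q_def by (simp add: prev_occ_fun_upd prev_occ_fun_upd_self)
  also have "\<dots> = (\<Sum>f\<in>words n N. real n * Q f + real N + 2 * (\<Sum>t<N. real (prev_occ f t)))"
    using sum_occ_squared words_lessD by (intro sum.cong refl) (simp add: sum.distrib)
  also have "\<dots> = real n * (\<Sum>f\<in>words n N. Q f) + real n ^ N * real N + real n ^ N * real N * (real N - 1) / real n"
    using sum_collisions[of n N] n
    by (simp add: sum.distrib sum_distrib_left card_words field_simps)
  also have "\<dots> \<le> real n * (real n ^ N * ((real N)\<^sup>2 / real n + (real N)^3 / (real n)\<^sup>2))
      + real n ^ N * real N + real n ^ N * real N * (real N - 1) / real n"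
    using Suc n unfolding Q_def by (intro add_right_mono mult_left_mono) auto
  also have "\<dots> \<le> real n ^ Suc N * ((real (Suc N))\<^sup>2 / real n + (real (Suc N))^3 / (real n)\<^sup>2)"
    using n by (simp add: field_simps power2_eq_square power3_eq_cube)
  finally show ?case .
qed simp

lemma ln_add_one_ge_diff_square:
  fixes x :: real
  assumes "0 \<le> x"
  shows "x - x\<^sup>2 \<le> ln (1 + x)"
proof (cases "x \<le> 1")
  case False
  then have "x - x\<^sup>2 \<le> 0"
    by (simp add: power2_eq_square)
  also have "0 \<le> ln (1 + x)"
    using assms by simp
  finally show ?thesis .
qed (use ln_one_plus_pos_lower_bound assms in auto)

lemma sum_of_nat_lessThan: "(\<Sum>t<N. real t) = real N * (real N - 1) / 2"
  by (induction N) (auto simp: field_simps)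

lemma ln_prod_ratio_ge:
  fixes a :: real and c :: "nat \<Rightarrow> nat"
  assumes a: "a > 0" and n: "n > 0"
  shows "((\<Sum>t<N. real (c t)) - real N * (real N - 1) / (2 * real n)) / a - (\<Sum>t<N. (real (c t))\<^sup>2) / a\<^sup>2
      \<le> ln (\<Prod>t<N. (a + real (c t)) / (a + real t / real n))"
proof -
  have pos: "a + real t / real n > 0" for t
    using a by (simp add: add_pos_nonneg)
  have term_ge: "real (c t) / a - (real (c t))\<^sup>2 / a\<^sup>2 - real t / (a * real n)
      \<le> ln ((a + real (c t)) / (a + real t / real n))" for t
  proof -
    have "1 + real (c t) / a = (a + real (c t)) / a" "1 + real t / (a * real n) = (a + real t / real n) / a"
      using a n by (simp_all add: field_simps)
    then have "(a + real (c t)) / (a + real t / real n) = (1 + real (c t) / a) / (1 + real t / (a * real n))"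
      using a by simp
    moreover have "1 + real (c t) / a > 0" "1 + real t / (a * real n) > 0"
      using a n by (auto intro: add_pos_nonneg)
    ultimately have "ln ((a + real (c t)) / (a + real t / real n)) = ln (1 + real (c t) / a) - ln (1 + real t / (a * real n))"
      by (simp add: ln_div)
    moreover have "real (c t) / a - (real (c t) / a)\<^sup>2 \<le> ln (1 + real (c t) / a)"
      using a by (intro ln_add_one_ge_diff_square) simp
    moreover have "ln (1 + real t / (a * real n)) \<le> real t / (a * real n)"
      using a by (intro ln_add_one_self_le_self) simp
    ultimately show ?thesis
      by (simp add: power_divide)
  qed
  have "((\<Sum>t<N. real (c t)) - real N * (real N - 1) / (2 * real n)) / a - (\<Sum>t<N. (real (c t))\<^sup>2) / a\<^sup>2
      = (\<Sum>t<N. real (c t)) / a - (\<Sum>t<N. (real (c t))\<^sup>2) / a\<^sup>2 - (\<Sum>t<N. real t) / (a * real n)"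
    using a n by (simp add: sum_of_nat_lessThan field_simps)
  also have "\<dots> = (\<Sum>t<N. real (c t) / a - (real (c t))\<^sup>2 / a\<^sup>2 - real t / (a * real n))"
    by (simp add: sum_subtractf sum_divide_distrib)
  also have "\<dots> \<le> (\<Sum>t<N. ln ((a + real (c t)) / (a + real t / real n)))"
    by (intro sum_mono term_ge)
  also have "\<dots> = ln (\<Prod>t<N. (a + real (c t)) / (a + real t / real n))"
  proof (intro ln_prod[symmetric])
    fix t
    show "(a + real (c t)) / (a + real t / real n) \<noteq> 0"
      using a pos[of t] by (metis add_pos_nonneg divide_pos_pos less_irrefl of_nat_0_le_iff)
  qed simp
  finally show ?thesis .
qed

lemma polya_eq_prod_ratio:
  assumes "a > 0" "n > 0"
  shows "polya n N a f = (\<Prod>t<N. (a + real (prev_occ f t)) / (a + real t / real n)) / real n ^ N"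
proof -
  have "(\<Prod>t<N. a * real n + real t) = (\<Prod>t<N. real n * (a + real t / real n))"
    using assms by (intro prod.cong) (auto simp: field_simps)
  then have "(\<Prod>t<N. a * real n + real t) = real n ^ N * (\<Prod>t<N. a + real t / real n)"
    by (simp add: prod.distrib)
  moreover have "a + real t / real n > 0" for t
    using assms by (intro add_pos_nonneg) auto
  then have "a + real t / real n \<noteq> 0" for t
    by (metis less_irrefl)
  ultimately show ?thesis
    unfolding polya_def by (simp add: prod_dividef)
qed

lemma polya_deficit_le:
  assumes a: "a > 0" and n: "n > 0"
  shows "max (1 / real n ^ N - polya n N a f) 0
      \<le> (\<bar>(\<Sum>t<N. real (prev_occ f t)) - real N * (real N - 1) / (2 * real n)\<bar> / a
          + (\<Sum>t<N. (real (prev_occ f t))\<^sup>2) / a\<^sup>2) / real n ^ N"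
proof -
  define r where "r = (\<Prod>t<N. (a + real (prev_occ f t)) / (a + real t / real n))"
  define D where "D = (\<Sum>t<N. real (prev_occ f t)) - real N * (real N - 1) / (2 * real n)"
  define B where "B = \<bar>D\<bar> / a + (\<Sum>t<N. (real (prev_occ f t))\<^sup>2) / a\<^sup>2"
  have "r > 0"
    unfolding r_def using a by (intro prod_pos divide_pos_pos add_pos_nonneg) auto
  then have "1 - r \<le> - ln r"
    using ln_le_minus_one by force
  also have "- ln r \<le> B"
  proof -
    have "- (D / a) \<le> \<bar>D\<bar> / a"
      using abs_ge_minus_self[of "D / a"] a by simp
    then show ?thesis
      using ln_prod_ratio_ge[OF a n, where c = "prev_occ f" and N = N] unfolding r_def B_def D_def
      by linarith
  qed
  finally have "1 - r \<le> B" .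
  moreover have "0 \<le> B"
    unfolding B_def using a by (intro add_nonneg_nonneg divide_nonneg_nonneg sum_nonneg) auto
  ultimately have "max (1 - r) 0 \<le> B"
    by simp
  then have "max (1 - r) 0 / real n ^ N \<le> B / real n ^ N"
    by (simp add: divide_right_mono)
  moreover have "max (1 / real n ^ N - polya n N a f) 0 = max (1 - r) 0 / real n ^ N"
    using n unfolding polya_eq_prod_ratio[OF a n] r_def by (simp add: max_divide_distrib_right diff_divide_distrib)
  ultimately show ?thesis
    by (simp add: B_def D_def)
qed

lemma half_sum_abs_diff_eq:
  fixes p q :: "'a \<Rightarrow> real"
  assumes "(\<Sum>x\<in>A. p x) = (\<Sum>x\<in>A. q x)"
  shows "(1/2) * (\<Sum>x\<in>A. \<bar>p x - q x\<bar>) = (\<Sum>x\<in>A. max (q x - p x) 0)"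
proof -
  have "(\<Sum>x\<in>A. \<bar>p x - q x\<bar>) = (\<Sum>x\<in>A. (p x - q x) + 2 * max (q x - p x) 0)"
    by (intro sum.cong) (auto simp: max_def)
  then show ?thesis
    using assms by (simp add: sum.distrib sum_subtractf sum_distrib_left)
qed

lemma polya_tv_le:
  assumes a: "a > 0" and n: "n > 0"
  shows "(1/2) * (\<Sum>f\<in>words n N. \<bar>polya n N a f - 1 / real n ^ N\<bar>)
      \<le> real N / sqrt (real n) / a + ((real N)\<^sup>2 / real n + (real N)^3 / (real n)\<^sup>2) / a\<^sup>2"
proof -
  define X where "X f = \<bar>(\<Sum>t<N. real (prev_occ f t)) - real N * (real N - 1) / (2 * real n)\<bar>" for f
  define Q where "Q f = (\<Sum>t<N. (real (prev_occ f t))\<^sup>2)" for f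
  have "a * real n + real t \<noteq> 0" for t
    using a n by (metis add_pos_nonneg less_irrefl mult_pos_pos of_nat_0_less_iff of_nat_0_le_iff)
  then have "(\<Sum>f\<in>words n N. polya n N a f) = (\<Sum>f\<in>words n N. 1 / real n ^ N)"
    using n by (simp add: polya_def card_words sum_prod_prev_occ flip: sum_divide_distrib)
  then have "(1/2) * (\<Sum>f\<in>words n N. \<bar>polya n N a f - 1 / real n ^ N\<bar>)
      = (\<Sum>f\<in>words n N. max (1 / real n ^ N - polya n N a f) 0)"
    by (rule half_sum_abs_diff_eq)
  also have "\<dots> \<le> (\<Sum>f\<in>words n N. (X f / a + Q f / a\<^sup>2) / real n ^ N)"
    unfolding X_def Q_def by (intro sum_mono polya_deficit_le a n)
  also have "\<dots> = ((\<Sum>f\<in>words n N. X f) / a + (\<Sum>f\<in>words n N. Q f) / a\<^sup>2) / real n ^ N"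
    by (simp add: sum.distrib sum_divide_distrib add_divide_distrib)
  also have "\<dots> \<le> (real n ^ N * (real N / sqrt (real n)) / a
      + real n ^ N * ((real N)\<^sup>2 / real n + (real N)^3 / (real n)\<^sup>2) / a\<^sup>2) / real n ^ N"
    using sum_abs_collisions_dev[OF n, of N] sum_sum_prev_occ_squared[OF n, of N] a
    unfolding X_def Q_def by (intro divide_right_mono add_mono) auto
  also have "\<dots> = real N / sqrt (real n) / a + ((real N)\<^sup>2 / real n + (real N)^3 / (real n)\<^sup>2) / a\<^sup>2"
    using n by (simp add: field_simps)
  finally show ?thesis .
qed

definition arc_word :: "nat \<Rightarrow> nat \<Rightarrow> (nat \<Rightarrow> nat \<Rightarrow> nat) \<Rightarrow> nat \<Rightarrow> nat" where
  "arc_word k n M = (\<lambda>t. if t < k * n then M (t div k) (t mod k) else undefined)"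

definition kout_of_word :: "nat \<Rightarrow> nat \<Rightarrow> (nat \<Rightarrow> nat) \<Rightarrow> nat \<Rightarrow> nat \<Rightarrow> nat" where
  "kout_of_word k n f = (\<lambda>i. if i < n then (\<lambda>l. if l < k then f (i * k + l) else undefined) else undefined)"

lemma mult_add_less_mult: "(i::nat) < n \<Longrightarrow> l < k \<Longrightarrow> i * k + l < k * n"
proof -
  assume "i < n" "l < k"
  then have "i * k + l < (i + 1) * k"
    by simp
  also have "\<dots> \<le> n * k"
    using \<open>i < n\<close> by (intro mult_right_mono) auto
  finally show ?thesis
    by (simp add: mult.commute)
qed

lemma div_less_of_less_mult: "(t::nat) < k * n \<Longrightarrow> t div k < n"
  by (simp add: less_mult_imp_div_less mult.commute)

lemma mod_less_of_less_mult: "(t::nat) < k * n \<Longrightarrow> t mod k < k"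
  by (cases k) auto

lemma bij_betw_arc_word: "bij_betw (arc_word k n) (kout_maps n k) (words n (k * n))"
proof (rule bij_betw_byWitness[where f' = "kout_of_word k n"])
  show "\<forall>M\<in>kout_maps n k. kout_of_word k n (arc_word k n M) = M"
    using mult_add_less_mult
    by (auto simp: fun_eq_iff kout_of_word_def arc_word_def kout_maps_def PiE_iff extensional_def)
  show "\<forall>f\<in>words n (k * n). arc_word k n (kout_of_word k n f) = f"
    using div_less_of_less_mult mod_less_of_less_mult
    by (auto simp: fun_eq_iff kout_of_word_def arc_word_def PiE_iff extensional_def)
  show "arc_word k n ` kout_maps n k \<subseteq> words n (k * n)"
    using div_less_of_less_mult mod_less_of_less_mult
    by (fastforce simp: arc_word_def kout_maps_def PiE_iff extensional_def)
  show "kout_of_word k n ` words n (k * n) \<subseteq> kout_maps n k"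
    using mult_add_less_mult by (fastforce simp: kout_of_word_def kout_maps_def PiE_iff extensional_def)
qed

lemma indeg_eq_occ: "indeg n k M j = occ (arc_word k n M) (k * n) j"
proof -
  have "bij_betw (\<lambda>(i, l). i * k + l) {(i, l). i < n \<and> l < k \<and> M i l = j}
      {t. t < k * n \<and> arc_word k n M t = j}"
  proof (rule bij_betw_byWitness[where f' = "\<lambda>t. (t div k, t mod k)"])
    show "(\<lambda>(i, l). i * k + l) ` {(i, l). i < n \<and> l < k \<and> M i l = j}
        \<subseteq> {t. t < k * n \<and> arc_word k n M t = j}"
      using mult_add_less_mult by (auto simp: arc_word_def)
    show "(\<lambda>t. (t div k, t mod k)) ` {t. t < k * n \<and> arc_word k n M t = j}
        \<subseteq> {(i, l). i < n \<and> l < k \<and> M i l = j}"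
      using div_less_of_less_mult mod_less_of_less_mult by (auto simp: arc_word_def)
    show "\<forall>p\<in>{(i, l). i < n \<and> l < k \<and> M i l = j}. (\<lambda>t. (t div k, t mod k)) ((\<lambda>(i, l). i * k + l) p) = p"
      by auto
    show "\<forall>t\<in>{t. t < k * n \<and> arc_word k n M t = j}. (\<lambda>(i, l). i * k + l) ((\<lambda>t. (t div k, t mod k)) t) = t"
      by (simp add: mult.commute)
  qed
  then show ?thesis
    unfolding indeg_def occ_def by (rule bij_betw_same_card)
qed

lemma prod_pochhammer_occ:
  fixes a :: "'a::comm_semiring_1"
  shows "(\<And>s. s < N \<Longrightarrow> f s < n) \<Longrightarrow>
    (\<Prod>j<n. pochhammer a (occ f N j)) = (\<Prod>t<N. a + of_nat (prev_occ f t))"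
proof (induction N)
  case (Suc N)
  have "(\<Prod>j<n. pochhammer a (occ f (Suc N) j)) =
      (\<Prod>j<n. pochhammer a (occ f N j) * (if f N = j then a + of_nat (occ f N j) else 1))"
    by (intro prod.cong) (auto simp: occ_Suc pochhammer_Suc)
  also have "\<dots> = (\<Prod>j<n. pochhammer a (occ f N j)) * (a + of_nat (prev_occ f N))"
    using Suc.prems by (simp add: prod.distrib prod.delta prev_occ_def)
  finally show ?case
    using Suc by simp
qed (simp add: occ_def)

lemma prob_alpha_eq_polya:
  assumes "M \<in> kout_maps n k"
  shows "prob_alpha n k a M = polya n (k * n) a (arc_word k n M)"
proof -
  have "arc_word k n M \<in> words n (k * n)"
    using bij_betw_apply[OF bij_betw_arc_word assms] .
  then have num: "(\<Prod>j<n. pochhammer a (indeg n k M j)) = (\<Prod>t<k * n. a + real (prev_occ (arc_word k n M) t))"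
    unfolding indeg_eq_occ by (intro prod_pochhammer_occ) (rule words_lessD)
  have den: "pochhammer (a * real n) (k * n) = (\<Prod>t<k * n. a * real n + real t)"
    by (simp add: pochhammer_prod atLeast0LessThan)
  show ?thesis
    unfolding prob_alpha_def polya_def num den ..
qed

lemma dTV_eq_polya:
  "dTV n k a = (1/2) * (\<Sum>f\<in>words n (k * n). \<bar>polya n (k * n) a f - 1 / real n ^ (k * n)\<bar>)"
proof -
  have "(\<Sum>M\<in>kout_maps n k. \<bar>prob_alpha n k a M - prob_unif n k M\<bar>)
      = (\<Sum>M\<in>kout_maps n k. \<bar>polya n (k * n) a (arc_word k n M) - 1 / real n ^ (k * n)\<bar>)"
    by (intro sum.cong refl) (simp only: prob_alpha_eq_polya prob_unif_def)
  also have "\<dots> = (\<Sum>f\<in>words n (k * n). \<bar>polya n (k * n) a f - 1 / real n ^ (k * n)\<bar>)"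
    by (rule sum.reindex_bij_betw[OF bij_betw_arc_word])
  finally show ?thesis
    unfolding dTV_def by simp
qed

lemma dTV_le:
  assumes "a > 0" "n > 0"
  shows "dTV n k a \<le> real k / (a / sqrt (real n)) + ((real k)\<^sup>2 + real k ^ 3) / (a / sqrt (real n))\<^sup>2"
proof -
  have "dTV n k a \<le> real (k * n) / sqrt (real n) / a
      + ((real (k * n))\<^sup>2 / real n + (real (k * n)) ^ 3 / (real n)\<^sup>2) / a\<^sup>2"
    unfolding dTV_eq_polya using polya_tv_le[OF assms] .
  also have "\<dots> = real k / (a / sqrt (real n)) + ((real k)\<^sup>2 + real k ^ 3) / (a / sqrt (real n))\<^sup>2"
  proof -
    define r where "r = sqrt (real n)"
    have "r > 0" "real n = r\<^sup>2"
      using assms by (simp_all add: r_def)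
    then show ?thesis
      unfolding r_def[symmetric] of_nat_mult using assms by (simp add: field_simps power2_eq_square power3_eq_cube)
  qed
  finally show ?thesis .
qed

theorem theorem1:
  fixes k :: nat and \<alpha> :: "nat \<Rightarrow> real"
  assumes "\<forall>n. 0 < \<alpha> n"
    and "filterlim (\<lambda>n. \<alpha> n / sqrt (real n)) at_top sequentially"
  shows "(\<lambda>n. dTV n k (\<alpha> n)) \<longlonglongrightarrow> 0"
proof (rule tendsto_sandwich[OF _ _ tendsto_const])
  define w where "w n = \<alpha> n / sqrt (real n)" for n
  have w: "filterlim w at_infinity sequentially"
    using assms(2) unfolding w_def by (rule filterlim_at_top_imp_at_infinity)
  have w2: "filterlim (\<lambda>n. (w n)\<^sup>2) at_infinity sequentially"
    using filterlim_pow_at_top[OF _ assms(2), of 2] unfolding w_def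
    by (auto intro: filterlim_at_top_imp_at_infinity)
  show "(\<lambda>n. real k / w n + ((real k)\<^sup>2 + real k ^ 3) / (w n)\<^sup>2) \<longlonglongrightarrow> 0"
    using tendsto_add[OF tendsto_divide_0[OF tendsto_const w] tendsto_divide_0[OF tendsto_const w2]]
    by simp
  show "\<forall>\<^sub>F n in sequentially. dTV n k (\<alpha> n) \<le> real k / w n + ((real k)\<^sup>2 + real k ^ 3) / (w n)\<^sup>2"
    using eventually_gt_at_top[of 0] by eventually_elim (use assms(1) dTV_le w_def in auto)
  show "\<forall>\<^sub>F n in sequentially. 0 \<le> dTV n k (\<alpha> n)"
    by (simp add: dTV_def sum_nonneg)
qed

end
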